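(* Assume the setting and algorithm described in the context. If $0<\alpha\le\frac{\sqrt n}{\sqrt{8m}\,L}$, then for all $k\ge0$, almost surely, $$\mathbb E\big[t^{k+1}\,|\,\mathcal F^k\big]\le 2t^k+3\alpha^2\|\overline{\nabla\mathbf f}(x^k)\|^2+\frac{9}{4mn}\|x^k-Jx^k\|^2 .$$
   Context: Setting. Let $n,m,p\ge1$ be integers and $\mathcal V=\{1,\dots,n\}$. For each $i\in\mathcal V$ and $j\in\{1,\dots,m\}$, $f_{i,j}:\mathbb R^p\to\mathbb R$ is differentiable and $L$-smooth for some $L>0$, i.e. $\|\nabla f_{i,j}(x)-\nabla f_{i,j}(y)\|\le L\|x-y\|$ for all $x,y\in\mathbb R^p$. Let $f_i:=\frac1m\sum_{j=1}^m f_{i,j}$ and $F:=\frac1n\sum_{i=1}^n f_i$, and assume $F^*:=\inf_{x\in\mathbb R^p}F(x)>-\infty$. Let $\underline W=(\underline w_{ir})\in\mathbb R^{n\times n}$ be a nonnegative, primitive, doubly stochastic matrix ($\underline W\mathbf 1_n=\mathbf 1_n$, $\mathbf 1_n^\top\underline W=\mathbf 1_n^\top$), and let $\lambda\in[0,1)$ be its second largest singular value. Any expression with $\lambda$ in a denominator is read as $+\infty$ when $\lambda=0$. Algorithm GT-SAGA with step-size $\alpha>0$: fix a deterministic $\bar x^0\in\mathbb R^p$; for all $i\in\mathcal V$ set $x_i^0=\bar x^0$, $z_{i,j}^0=x_i^0$ for all $j$, $y_i^0=0$, $g_i^{-1}=0$. For $k=0,1,2,\dots$ and every $i\in\mathcal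 V$: draw $\tau_i^k$ uniformly from $\{1,\dots,m\}$; set $g_i^k=\nabla f_{i,\tau_i^k}(x_i^k)-\nabla f_{i,\tau_i^k}(z_{i,\tau_i^k}^k)+\frac1m\sum_{j=1}^m\nabla f_{i,j}(z_{i,j}^k)$; set $y_i^{k+1}=\sum_{r=1}^n\underline w_{ir}(y_r^k+g_r^k-g_r^{k-1})$; set $x_i^{k+1}=\sum_{r=1}^n\underline w_{ir}(x_r^k-\alpha y_r^{k+1})$; draw $s_i^k$ uniformly from $\{1,\dots,m\}$; set $z_{i,j}^{k+1}=x_i^k$ if $j=s_i^k$ and $z_{i,j}^{k+1}=z_{i,j}^k$ otherwise. The family $\{\tau_i^k,s_i^k: i\in\mathcal V,k\ge0\}$ is independent. Notation. $x^k,y^k,g^k\in\mathbb R^{np}$ stack the $x_i^k$, $y_i^k$, $g_i^k$; $\nabla\mathbf f(x^k)\in\mathbb R^{np}$ stacks $\nabla f_i(x_i^k)$, $i=1,\dots,n$; $W=\underline W\otimes I_p$, $J=(\frac1n\mathbf 1_n\mathbf 1_n^\top)\otimes I_p$; $\bar x^k=\frac1n\sum_i x_i^k$, $\bar g^k=\frac1n\sum_i g_i^k$, $\overline{\nabla\mathbf f}(x^k)=\frac1n\sum_i\nabla f_i(x_i^k)$. $\mathcal F^0$ is the trivial $\sigma$-algebra and $\mathcal F^k=\sigma(\{\tau_i^t,s_i^t:i\in\mathcal V,\ t\le k-1\})$ for $k\ge1$. $t^k:=\frac1n\sum_{i=1}^n\frac1m\sum_{j=1}^m\|\bar x^k-z_{i,j}^k\|^2$.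 $\|\nabla\mathbf f(x^0)\|^2:=\sum_{i=1}^n\|\nabla f_i(\bar x^0)\|^2$. Norms are Euclidean (spectral for matrices); vector and matrix inequalities are entrywise. *)

theory Defs
  imports "HOL-Probability.Probability"
begin

(* Agents are indexed by {..<n}, component functions by {..<m} (0-based). *)

fun matpow :: "nat \<Rightarrow> (nat \<Rightarrow> nat \<Rightarrow> real) \<Rightarrow> nat \<Rightarrow> nat \<Rightarrow> nat \<Rightarrow> real" where
  "matpow n W 0 i j = (if i = j then 1 else 0)"
| "matpow n W (Suc k) i j = (\<Sum>r<n. matpow n W k i r * W r j)"

definition primitive_mat :: "nat \<Rightarrow> (nat \<Rightarrow> nat \<Rightarrow> real) \<Rightarrow> bool" where
  "primitive_mat n W \<longleftrightarrow> (\<exists>k. \<forall>i<n. \<forall>j<n. matpow n W k i j > 0)"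

definition doubly_stochastic :: "nat \<Rightarrow> (nat \<Rightarrow> nat \<Rightarrow> real) \<Rightarrow> bool" where
  "doubly_stochastic n W \<longleftrightarrow> (\<forall>i<n. (\<Sum>r<n. W i r) = 1) \<and> (\<forall>r<n. (\<Sum>i<n. W i r) = 1)"

definition saga_g ::
  "nat \<Rightarrow> (nat \<Rightarrow> nat \<Rightarrow> 'v \<Rightarrow> 'v::real_vector) \<Rightarrow> nat \<Rightarrow> (nat \<Rightarrow> 'v) \<Rightarrow> (nat \<Rightarrow> nat \<Rightarrow> 'v) \<Rightarrow> nat \<Rightarrow> 'v" where
  "saga_g m G tau x z i =
     G i tau (x i) - G i tau (z i tau) + (1 / real m) *\<^sub>R (\<Sum>j<m. G i j (z i j))"

text \<open>State of GT-SAGA at iteration k along a sample path (tau k i, s k i):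
  (x^k, y^k, g^{k-1}, z^k).\<close>
fun gtsaga ::
  "nat \<Rightarrow> nat \<Rightarrow> (nat \<Rightarrow> nat \<Rightarrow> real) \<Rightarrow> (nat \<Rightarrow> nat \<Rightarrow> 'v \<Rightarrow> 'v::real_vector) \<Rightarrow> real \<Rightarrow> 'v
   \<Rightarrow> (nat \<Rightarrow> nat \<Rightarrow> nat) \<Rightarrow> (nat \<Rightarrow> nat \<Rightarrow> nat) \<Rightarrow> nat
   \<Rightarrow> (nat \<Rightarrow> 'v) \<times> (nat \<Rightarrow> 'v) \<times> (nat \<Rightarrow> 'v) \<times> (nat \<Rightarrow> nat \<Rightarrow> 'v)" where
  "gtsaga n m W G \<alpha> x0 tau s 0 = ((\<lambda>i. x0), (\<lambda>i. 0), (\<lambda>i. 0), (\<lambda>i j. x0))"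
| "gtsaga n m W G \<alpha> x0 tau s (Suc k) =
     (case gtsaga n m W G \<alpha> x0 tau s k of (x, y, gp, z) \<Rightarrow>
       let g = (\<lambda>i. saga_g m G (tau k i) x z i);
           y' = (\<lambda>i. \<Sum>r<n. W i r *\<^sub>R (y r + g r - gp r));
           x' = (\<lambda>i. \<Sum>r<n. W i r *\<^sub>R (x r - \<alpha> *\<^sub>R y' r));
           z' = (\<lambda>i j. if j = s k i then x i else z i j)
       in (x', y', g, z'))"

definition gt_x where "gt_x n m W G \<alpha> x0 tau s k = fst (gtsaga n m W G \<alpha> x0 tau s k)"
definition gt_z where "gt_z n m W G \<alpha> x0 tau s k = snd (snd (snd (gtsaga n m W G \<alpha> x0 tau s k)))"

definition avg :: "nat \<Rightarrow> (nat \<Rightarrow> 'v::real_vector) \<Rightarrow> 'v" where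
  "avg n v = (1 / real n) *\<^sub>R (\<Sum>i<n. v i)"

definition gt_t where
  "gt_t n m W G \<alpha> x0 tau s k =
     (let x = gt_x n m W G \<alpha> x0 tau s k; z = gt_z n m W G \<alpha> x0 tau s k
      in (1 / real n) * (\<Sum>i<n. (1 / real m) * (\<Sum>j<m. (norm (avg n x - z i j))\<^sup>2)))"

text \<open>||x - Jx||^2 = sum_i ||x_i - xbar||^2\<close>
definition consensus_err :: "nat \<Rightarrow> (nat \<Rightarrow> 'v::real_normed_vector) \<Rightarrow> real" where
  "consensus_err n x = (\<Sum>i<n. (norm (x i - avg n x))\<^sup>2)"

definition avg_grad :: "nat \<Rightarrow> nat \<Rightarrow> (nat \<Rightarrow> nat \<Rightarrow> 'v \<Rightarrow> 'v::real_vector) \<Rightarrow> (nat \<Rightarrow> 'v) \<Rightarrow> 'v" where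
  "avg_grad n m G x = avg n (\<lambda>i. (1 / real m) *\<^sub>R (\<Sum>j<m. G i j (x i)))"

definition filt :: "'w measure \<Rightarrow> nat \<Rightarrow> (nat \<Rightarrow> nat \<Rightarrow> 'w \<Rightarrow> nat) \<Rightarrow> (nat \<Rightarrow> nat \<Rightarrow> 'w \<Rightarrow> nat) \<Rightarrow> nat \<Rightarrow> 'w measure" where
  "filt M n tau s k = sigma (space M)
     {X -` A \<inter> space M | X A. \<exists>t i. t < k \<and> i < n \<and> (X = tau t i \<or> X = s t i)}"

end

(*
  Conditioned on F^k, the past samples fix the state (x^k, y^k, g^(k-1), z^k), while the
  fresh samples tau^k and s^k are uniform and independent of F^k; hence the conditional
  expectation of t^(k+1) is the plain average of t^(k+1) over all choices of the fresh samples.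

  Gradient tracking keeps the average of y equal to the average of g^(k-1), so
  xbar^(k+1) = xbar^k - alpha gbar^k. Averaging over s^k, each table entry z_ij^(k+1) is x_i^k
  with weight 1/m and z_ij^k otherwise. Averaging over tau^k, gbar^k is an unbiased estimate of
  the averaged local gradients whose variance is, by L-smoothness, at most
  2 L^2 (||x^k - J x^k||^2 + n t^k) / n^2. Young's inequality ||a - b||^2 <= 2||a||^2 + 2||b||^2
  and the step-size condition alpha^2 L^2 <= n / (8 m) then produce the constants 2, 3 and 9/4.

  Only smoothness, the column sums of W and the sampling model enter this one-step estimate.
*)

theory Submission
  imports Defs
begin

section \<open>Averages over independent uniform choices\<close>

lemma sum_PiE_eval:
  fixes h :: "'b \<Rightarrow> real"
  assumes I: "finite I" "i \<in> I" and J: "finite J"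
  shows "(\<Sum>g\<in>PiE I (\<lambda>_. J). h (g i)) = real (card J) ^ (card I - 1) * (\<Sum>a\<in>J. h a)"
proof -
  have "(\<Sum>g\<in>PiE I (\<lambda>_. J). h (g i)) = (\<Sum>g\<in>PiE I (\<lambda>_. J). \<Prod>x\<in>I. if x = i then h (g x) else 1)"
    using I by (simp add: prod.If_cases Int_absorb1)
  also have "\<dots> = (\<Prod>x\<in>I. \<Sum>y\<in>J. if x = i then h y else 1)"
    using prod_sum_PiE[OF I(1), of "\<lambda>_. J" "\<lambda>x y. if x = i then h y else 1"] J by simp
  also have "\<dots> = (\<Prod>x\<in>I. if x = i then (\<Sum>y\<in>J. h y) else real (card J))"
    by (intro prod.cong) auto
  also have "\<dots> = real (card J) ^ (card I - 1) * (\<Sum>a\<in>J. h a)"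
    using I by (simp add: prod.If_cases Int_absorb1 card_Diff_singleton Diff_eq[symmetric])
  finally show ?thesis .
qed

lemma sum_PiE_eval_pair:
  fixes h :: "'b \<Rightarrow> 'b \<Rightarrow> real"
  assumes I: "finite I" "i \<in> I" "l \<in> I" "i \<noteq> l" and J: "finite J"
  shows "(\<Sum>g\<in>PiE I (\<lambda>_. J). h (g i) (g l)) = real (card J) ^ (card I - 2) * (\<Sum>a\<in>J. \<Sum>b\<in>J. h a b)"
proof -
  let ?f = "\<lambda>a b x y. if x = i then h a b * of_bool (y = a) else if x = l then of_bool (y = b) else (1::real)"
  have prod_f: "(\<Prod>x\<in>I. ?f a b x (g x)) = h a b * of_bool (g i = a) * of_bool (g l = b)" for a b g
  proof -
    have "(\<Prod>x\<in>I. ?f a b x (g x)) = ?f a b i (g i) * (?f a b l (g l) * (\<Prod>x\<in>I-{i}-{l}. ?f a b x (g x)))"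
      using I by (simp add: prod.remove)
    also have "(\<Prod>x\<in>I-{i}-{l}. ?f a b x (g x)) = 1" by (intro prod.neutral) auto
    finally show ?thesis using I by simp
  qed
  have prod_sum_f: "(\<Prod>x\<in>I. \<Sum>y\<in>J. ?f a b x y) = h a b * real (card J) ^ (card I - 2)"
    if ab: "a \<in> J" "b \<in> J" for a b
  proof -
    let ?F = "\<lambda>x. if x = i then h a b else if x = l then 1 else real (card J)"
    have "(\<Prod>x\<in>I. \<Sum>y\<in>J. ?f a b x y) = (\<Prod>x\<in>I. ?F x)"
      using ab J by (intro prod.cong) (auto simp: of_bool_def sum.delta sum_distrib_left[symmetric])
    also have "\<dots> = ?F i * (\<Prod>x\<in>I-{i}. ?F x)"
      by (rule prod.remove[OF I(1,2)])
    also have "(\<Prod>x\<in>I-{i}. ?F x) = ?F l * (\<Prod>x\<in>I-{i}-{l}. ?F x)"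
      using I by (intro prod.remove) auto
    also have "(\<Prod>x\<in>I-{i}-{l}. ?F x) = real (card J) ^ card (I-{i}-{l})"
      by (simp add: prod.cong[of _ _ _ "\<lambda>_. real (card J)"])
    finally show ?thesis using I by (simp add: card_Diff_singleton numeral_2_eq_2)
  qed
  have "(\<Sum>g\<in>PiE I (\<lambda>_. J). h (g i) (g l))
      = (\<Sum>g\<in>PiE I (\<lambda>_. J). \<Sum>a\<in>J. \<Sum>b\<in>J. h a b * of_bool (g i = a) * of_bool (g l = b))"
    using I J by (intro sum.cong refl) (auto simp: sum_distrib_right[symmetric] Int_def Collect_conv_if)
  also have "\<dots> = (\<Sum>a\<in>J. \<Sum>b\<in>J. \<Prod>x\<in>I. \<Sum>y\<in>J. ?f a b x y)"
    by (simp add: sum.swap[of _ "PiE I (\<lambda>_. J)"] prod_sum_PiE[OF I(1)] J prod_f)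
  also have "\<dots> = real (card J) ^ (card I - 2) * (\<Sum>a\<in>J. \<Sum>b\<in>J. h a b)"
    by (simp add: prod_sum_f sum_distrib_right mult.commute)
  finally show ?thesis .
qed

text \<open>The cross terms between different coordinates vanish because every d i has zero sum.\<close>
lemma sum_PiE_norm_power2_zero_mean:
  fixes d :: "nat \<Rightarrow> nat \<Rightarrow> 'v::real_inner" and u :: 'v and \<beta> :: real
  assumes zero_mean: "\<And>i. i < n \<Longrightarrow> (\<Sum>a<m. d i a) = 0"
  shows "(\<Sum>\<tau>\<in>PiE {..<n} (\<lambda>_. {..<m}). (norm (u - \<beta> *\<^sub>R (\<Sum>i<n. d i (\<tau> i))))\<^sup>2)
     = real m ^ n * (norm u)\<^sup>2 + \<beta>\<^sup>2 * real m ^ (n - 1) * (\<Sum>i<n. \<Sum>a<m. (norm (d i a))\<^sup>2)"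
proof -
  let ?P = "PiE {..<n} (\<lambda>_. {..<m})"
  let ?v = "\<lambda>\<tau>. \<Sum>i<n. d i (\<tau> i)"
  have expand: "(norm (u - \<beta> *\<^sub>R ?v \<tau>))\<^sup>2 = (norm u)\<^sup>2 - 2 * \<beta> * inner u (?v \<tau>) + \<beta>\<^sup>2 * inner (?v \<tau>) (?v \<tau>)" for \<tau>
    unfolding power2_norm_eq_inner
    by (simp add: inner_diff_left inner_diff_right inner_commute power2_eq_square algebra_simps)
  have linear: "(\<Sum>\<tau>\<in>?P. inner u (?v \<tau>)) = 0"
  proof -
    have "(\<Sum>\<tau>\<in>?P. inner u (?v \<tau>)) = (\<Sum>i<n. \<Sum>\<tau>\<in>?P. inner u (d i (\<tau> i)))"
      by (simp add: inner_sum_right sum.swap[of _ ?P])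
    also have "\<dots> = (\<Sum>i<n. real m ^ (n - 1) * inner u (\<Sum>a<m. d i a))"
      by (intro sum.cong refl) (use sum_PiE_eval[of "{..<n}" _ "{..<m}"] in \<open>simp add: inner_sum_right\<close>)
    finally show ?thesis by (simp add: zero_mean)
  qed
  have cross: "(\<Sum>\<tau>\<in>?P. inner (d i (\<tau> i)) (d l (\<tau> l))) = 0" if "i < n" "l < n" "l \<noteq> i" for i l
  proof -
    have "(\<Sum>\<tau>\<in>?P. inner (d i (\<tau> i)) (d l (\<tau> l))) = real m ^ (n - 2) * (\<Sum>a<m. \<Sum>b<m. inner (d i a) (d l b))"
      using that sum_PiE_eval_pair[of "{..<n}" i l "{..<m}" "\<lambda>a b. inner (d i a) (d l b)"] by simp
    also have "(\<Sum>a<m. \<Sum>b<m. inner (d i a) (d l b)) = inner (\<Sum>a<m. d i a) (\<Sum>b<m. d l b)"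
      by (simp add: inner_sum_left inner_sum_right) (rule sum.swap)
    finally show ?thesis using that by (simp add: zero_mean)
  qed
  have diagonal: "(\<Sum>\<tau>\<in>?P. inner (d i (\<tau> i)) (d i (\<tau> i))) = real m ^ (n - 1) * (\<Sum>a<m. (norm (d i a))\<^sup>2)"
    if "i < n" for i
    using that sum_PiE_eval[of "{..<n}" i "{..<m}" "\<lambda>a. inner (d i a) (d i a)"]
    by (simp add: power2_norm_eq_inner)
  have quadratic: "(\<Sum>\<tau>\<in>?P. inner (?v \<tau>) (?v \<tau>)) = real m ^ (n - 1) * (\<Sum>i<n. \<Sum>a<m. (norm (d i a))\<^sup>2)"
  proof -
    have "(\<Sum>\<tau>\<in>?P. inner (?v \<tau>) (?v \<tau>)) = (\<Sum>i<n. \<Sum>l<n. \<Sum>\<tau>\<in>?P. inner (d i (\<tau> i)) (d l (\<tau> l)))"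
      by (simp add: inner_sum_right inner_sum_left sum.swap[of _ ?P]) (rule sum.cong[OF refl], rule sum.swap)
    also have "\<dots> = (\<Sum>i<n. \<Sum>\<tau>\<in>?P. inner (d i (\<tau> i)) (d i (\<tau> i)))"
      using cross by (intro sum.cong refl) (simp add: sum.remove[of "{..<n}"] sum.neutral)
    finally show ?thesis by (simp add: diagonal sum_distrib_left)
  qed
  have "(\<Sum>\<tau>\<in>?P. (norm (u - \<beta> *\<^sub>R ?v \<tau>))\<^sup>2) = real (card ?P) * (norm u)\<^sup>2
      - 2 * \<beta> * (\<Sum>\<tau>\<in>?P. inner u (?v \<tau>)) + \<beta>\<^sup>2 * (\<Sum>\<tau>\<in>?P. inner (?v \<tau>) (?v \<tau>))"
    by (simp add: expand sum.distrib sum_subtractf sum_distrib_left)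
  then show ?thesis by (simp add: linear quadratic card_PiE)
qed

lemma norm_diff_power2_le: "(norm (a - b))\<^sup>2 \<le> 2 * (norm a)\<^sup>2 + 2 * (norm (b::'v::real_normed_vector))\<^sup>2"
proof -
  have "(norm (a - b))\<^sup>2 \<le> (norm a + norm b)\<^sup>2"
    by (simp add: power_mono norm_triangle_ineq4)
  also have "\<dots> \<le> 2 * (norm a)\<^sup>2 + 2 * (norm b)\<^sup>2"
    using zero_le_power2[of "norm a - norm b"] unfolding power2_sum power2_diff by linarith
  finally show ?thesis .
qed

lemma sum_norm_power2_centered_le:
  fixes e :: "nat \<Rightarrow> 'v::real_inner"
  shows "(\<Sum>a<m. (norm (e a - (1 / real m) *\<^sub>R (\<Sum>b<m. e b)))\<^sup>2) \<le> (\<Sum>a<m. (norm (e a))\<^sup>2)"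
proof (cases "m = 0")
  case False
  define c where "c = (1 / real m) *\<^sub>R (\<Sum>b<m. e b)"
  have sum_e: "(\<Sum>b<m. e b) = real m *\<^sub>R c" using False by (simp add: c_def)
  have "(\<Sum>a<m. (norm (e a - c))\<^sup>2) = (\<Sum>a<m. (norm (e a))\<^sup>2 - 2 * inner (e a) c + inner c c)"
    unfolding power2_norm_eq_inner
    by (intro sum.cong refl) (simp add: inner_diff_left inner_diff_right inner_commute)
  also have "\<dots> = (\<Sum>a<m. (norm (e a))\<^sup>2) - real m * inner c c"
    using inner_sum_left[of e "{..<m}" c] by (simp add: sum.distrib sum_subtractf sum_distrib_left[symmetric] sum_e)
  finally show ?thesis unfolding c_def by simp
qed simp

lemma sum_of_bool_eq_mult:
  assumes "finite A" "a \<in> A"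
  shows "(\<Sum>x\<in>A. of_bool (a = x) * f x) = (f a :: 'b::semiring_1)"
proof -
  have "A \<inter> {x. a = x} = {a}" using assms(2) by auto
  then show ?thesis using assms(1) by simp
qed

lemma restrict_eq_PiE_iff:
  assumes "f \<in> PiE A B"
  shows "restrict g A = f \<longleftrightarrow> (\<forall>a\<in>A. g a = f a)"
  using assms by (auto simp: PiE_def extensional_def fun_eq_iff)

lemma restrict2_eq_PiE_iff:
  assumes "f \<in> PiE A (\<lambda>_. PiE B C)"
  shows "(\<lambda>a\<in>A. \<lambda>b\<in>B. g a b) = f \<longleftrightarrow> (\<forall>a\<in>A. \<forall>b\<in>B. g a b = f a b)"
proof -
  have "restrict (g a) B = f a \<longleftrightarrow> (\<forall>b\<in>B. g a b = f a b)" if "a \<in> A" for a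
    using assms that by (intro restrict_eq_PiE_iff) (rule PiE_mem)
  then show ?thesis by (simp add: restrict_eq_PiE_iff[OF assms])
qed

section \<open>Conditional expectation and independent events\<close>

lemma (in finite_measure) integral_indicator_mult_sum_indicator:
  assumes "finite I" "\<And>i. i \<in> I \<Longrightarrow> S i \<in> sets M" "A \<in> sets M"
  shows "(\<integral>x. indicator A x * (\<Sum>i\<in>I. indicator (S i) x * a i) \<partial>M) = (\<Sum>i\<in>I. a i * measure M (A \<inter> S i))"
proof -
  have "(\<lambda>x. indicator A x * (\<Sum>i\<in>I. indicator (S i) x * a i)) = (\<lambda>x. \<Sum>i\<in>I. a i * indicator (A \<inter> S i) x)"
    by (auto simp: sum_distrib_left indicator_inter_arith intro!: ext sum.cong)
  moreover have "(\<integral>x. (\<Sum>i\<in>I. a i * indicator (A \<inter> S i) x) \<partial>M) = (\<Sum>i\<in>I. \<integral>x. a i * indicator (A \<inter> S i) x \<partial>M)"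
    using assms by (intro Bochner_Integration.integral_sum integrable_mult_right integrable_real_indicator)
      (auto simp: emeasure_eq_measure)
  moreover have "A \<inter> S i \<inter> space M = A \<inter> S i" for i
    using sets.sets_into_space[OF assms(3)] by auto
  ultimately show ?thesis by simp
qed

text \<open>Conditioning on F replaces each event independent of F by its probability.\<close>
lemma (in prob_space) real_cond_exp_independent_events:
  fixes E :: "'p \<Rightarrow> 'a set" and B :: "'q \<Rightarrow> 'a set" and \<Phi> :: "'p \<Rightarrow> 'q \<Rightarrow> real"
  assumes F: "subalgebra M F" and P: "finite P" and Q: "finite Q"
    and E: "\<And>p. p \<in> P \<Longrightarrow> E p \<in> sets F" and B: "\<And>q. q \<in> Q \<Longrightarrow> B q \<in> sets M"
    and indep: "\<And>A q. A \<in> sets F \<Longrightarrow> q \<in> Q \<Longrightarrow> prob (A \<inter> B q) = prob A * c q"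
    and Y: "Y \<in> borel_measurable M"
    and Y_eq: "AE \<omega> in M. Y \<omega> = (\<Sum>p\<in>P. \<Sum>q\<in>Q. indicator (E p \<inter> B q) \<omega> * \<Phi> p q)"
  shows "AE \<omega> in M. real_cond_exp M F Y \<omega> = (\<Sum>p\<in>P. indicator (E p) \<omega> * (\<Sum>q\<in>Q. c q * \<Phi> p q))"
proof -
  have F_M: "A \<in> sets F \<Longrightarrow> A \<in> sets M" for A
    using F by (auto simp: subalgebra_def)
  interpret sigma_finite_subalgebra M F
    using F finite_measure_axioms
    by (intro finite_measure_subalgebra_is_sigma_finite)
      (simp add: finite_measure_subalgebra_def finite_measure_subalgebra_axioms_def)
  let ?S = "\<lambda>(p, q). E p \<inter> B q" and ?a = "\<lambda>(p, q). \<Phi> p q"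
  have Y_eq': "AE \<omega> in M. Y \<omega> = (\<Sum>pq\<in>P \<times> Q. indicator (?S pq) \<omega> * ?a pq)"
    using Y_eq by (simp add: sum.cartesian_product case_prod_beta)
  have S: "pq \<in> P \<times> Q \<Longrightarrow> ?S pq \<in> sets M" for pq
    using E B F_M by auto
  have Z_int: "integrable M (\<lambda>\<omega>. \<Sum>pq\<in>P \<times> Q. indicator (?S pq) \<omega> * ?a pq)"
    using P Q S by (intro Bochner_Integration.integrable_sum integrable_mult_left integrable_real_indicator)
      (auto simp: emeasure_eq_measure)
  have Y_int: "integrable M Y"
    using integrable_cong_AE[OF Y borel_measurable_integrable[OF Z_int] Y_eq'] Z_int by simp
  show ?thesis
  proof (rule real_cond_exp_charact)
    fix A assume A: "A \<in> sets F"
    have "(\<integral>\<omega>\<in>A. Y \<omega> \<partial>M) = (\<integral>\<omega>. indicator A \<omega> * (\<Sum>pq\<in>P \<times> Q. indicator (?S pq) \<omega> * ?a pq) \<partial>M)"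
      unfolding set_lebesgue_integral_def
      using Y_eq' Y F_M[OF A] borel_measurable_integrable[OF Z_int]
      by (intro integral_cong_AE) (auto elim!: AE_mp)
    also have "\<dots> = (\<Sum>pq\<in>P \<times> Q. ?a pq * prob (A \<inter> ?S pq))"
      using P Q S F_M[OF A] by (intro integral_indicator_mult_sum_indicator) auto
    also have "\<dots> = (\<Sum>p\<in>P. (\<Sum>q\<in>Q. c q * \<Phi> p q) * prob (A \<inter> E p))"
    proof -
      have "(\<Sum>pq\<in>P \<times> Q. ?a pq * prob (A \<inter> ?S pq)) = (\<Sum>p\<in>P. \<Sum>q\<in>Q. \<Phi> p q * prob (A \<inter> (E p \<inter> B q)))"
        by (subst sum.cartesian_product) (simp add: split_def)
      moreover have "prob (A \<inter> (E p \<inter> B q)) = prob (A \<inter> E p) * c q" if "p \<in> P" "q \<in> Q" for p q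
        using indep[of "A \<inter> E p" q] A E that by (simp add: Int_assoc)
      ultimately show ?thesis
        by (simp add: sum_distrib_left mult_ac cong: sum.cong)
    qed
    also have "\<dots> = (\<integral>\<omega>. indicator A \<omega> * (\<Sum>p\<in>P. indicator (E p) \<omega> * (\<Sum>q\<in>Q. c q * \<Phi> p q)) \<partial>M)"
      using P E F_M A by (intro integral_indicator_mult_sum_indicator[symmetric]) auto
    finally show "(\<integral>\<omega>\<in>A. Y \<omega> \<partial>M) = (\<integral>\<omega>\<in>A. (\<Sum>p\<in>P. indicator (E p) \<omega> * (\<Sum>q\<in>Q. c q * \<Phi> p q)) \<partial>M)"
      by (simp add: set_lebesgue_integral_def)
  next
    show "integrable M (\<lambda>\<omega>. \<Sum>p\<in>P. indicator (E p) \<omega> * (\<Sum>q\<in>Q. c q * \<Phi> p q))"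
      using P E F_M by (intro Bochner_Integration.integrable_sum integrable_mult_left integrable_real_indicator)
        (auto simp: emeasure_eq_measure)
    show "(\<lambda>\<omega>. \<Sum>p\<in>P. indicator (E p) \<omega> * (\<Sum>q\<in>Q. c q * \<Phi> p q)) \<in> borel_measurable F"
      using E by (intro borel_measurable_sum borel_measurable_times borel_measurable_indicator) auto
  qed (rule Y_int)
qed

lemma (in prob_space) AE_less_of_uniform:
  assumes X: "X \<in> M \<rightarrow>\<^sub>M count_space UNIV" and "m > 0"
    and uniform: "\<And>j. j < m \<Longrightarrow> prob {\<omega> \<in> space M. X \<omega> = j} = 1 / real m"
  shows "AE \<omega> in M. X \<omega> < m"
proof -
  have events: "{\<omega> \<in> space M. P (X \<omega>)} \<in> sets M" for P
    using measurable_sets[OF X, of "{a. P a}"] by (simp add: vimage_def Int_def conj_commute)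
  have "prob {\<omega> \<in> space M. X \<omega> < m} = prob (\<Union>j<m. {\<omega> \<in> space M. X \<omega> = j})"
    by (rule arg_cong[of _ _ prob]) auto
  also have "\<dots> = (\<Sum>j<m. prob {\<omega> \<in> space M. X \<omega> = j})"
    using events by (intro finite_measure_finite_Union) (auto simp: disjoint_family_on_def)
  also have "\<dots> = 1" using \<open>m > 0\<close> by (simp add: uniform)
  finally show ?thesis using events by (subst prob_Collect_eq_1[symmetric]) auto
qed

section \<open>One step of GT-SAGA and its average over the fresh samples\<close>

type_synonym 'v gt_state = "(nat \<Rightarrow> 'v) \<times> (nat \<Rightarrow> 'v) \<times> (nat \<Rightarrow> 'v) \<times> (nat \<Rightarrow> nat \<Rightarrow> 'v)"

definition gt_step :: "nat \<Rightarrow> nat \<Rightarrow> (nat \<Rightarrow> nat \<Rightarrow> real) \<Rightarrow> (nat \<Rightarrow> nat \<Rightarrow> 'v \<Rightarrow> 'v::real_vector) \<Rightarrow> real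
    \<Rightarrow> 'v gt_state \<Rightarrow> (nat \<Rightarrow> nat) \<Rightarrow> (nat \<Rightarrow> nat) \<Rightarrow> 'v gt_state" where
  "gt_step n m W G \<alpha> st \<tau> \<sigma> =
     (case st of (x, y, gp, z) \<Rightarrow>
       let g = (\<lambda>i. saga_g m G (\<tau> i) x z i);
           y' = (\<lambda>i. \<Sum>r<n. W i r *\<^sub>R (y r + g r - gp r));
           x' = (\<lambda>i. \<Sum>r<n. W i r *\<^sub>R (x r - \<alpha> *\<^sub>R y' r));
           z' = (\<lambda>i j. if j = \<sigma> i then x i else z i j)
       in (x', y', g, z'))"

lemma gtsaga_Suc_step:
  "gtsaga n m W G \<alpha> x0 tau s (Suc k) = gt_step n m W G \<alpha> (gtsaga n m W G \<alpha> x0 tau s k) (tau k) (s k)"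
  by (simp add: gt_step_def)

definition state_t :: "nat \<Rightarrow> nat \<Rightarrow> 'v::real_normed_vector gt_state \<Rightarrow> real" where
  "state_t n m st = (1 / real n) * (\<Sum>i<n. (1 / real m) * (\<Sum>j<m. (norm (avg n (fst st) - snd (snd (snd st)) i j))\<^sup>2))"

lemma gt_t_eq_state_t: "gt_t n m W G \<alpha> x0 tau s k = state_t n m (gtsaga n m W G \<alpha> x0 tau s k)"
  by (simp add: gt_t_def state_t_def gt_x_def gt_z_def)

text \<open>The entries of g and z belonging to indices i \<ge> n are junk that depends on samples
  outside the model; two states that agree up to this junk behave identically.\<close>
definition states_agree :: "nat \<Rightarrow> 'v gt_state \<Rightarrow> 'v gt_state \<Rightarrow> bool" where
  "states_agree n st st' \<longleftrightarrow> fst st = fst st' \<and> fst (snd st) = fst (snd st') \<and>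
     (\<forall>i<n. fst (snd (snd st)) i = fst (snd (snd st')) i \<and> snd (snd (snd st)) i = snd (snd (snd st')) i)"

lemma gt_step_cong:
  assumes "states_agree n st st'" "\<And>i. i < n \<Longrightarrow> \<tau> i = \<tau>' i \<and> \<sigma> i = \<sigma>' i"
  shows "states_agree n (gt_step n m W G \<alpha> st \<tau> \<sigma>) (gt_step n m W G \<alpha> st' \<tau>' \<sigma>')"
proof -
  obtain x y gp z gp' z' where st: "st = (x, y, gp, z)" and st': "st' = (x, y, gp', z')"
    using assms(1) by (cases st, cases st') (auto simp: states_agree_def)
  have agree: "\<And>i. i < n \<Longrightarrow> gp i = gp' i \<and> z i = z' i"
    using assms(1) by (simp add: states_agree_def st st')
  have g: "\<And>i. i < n \<Longrightarrow> saga_g m G (\<tau> i) x z i = saga_g m G (\<tau>' i) x z' i"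
    using agree assms(2) by (simp add: saga_g_def)
  have y': "(\<Sum>r<n. W i r *\<^sub>R (y r + saga_g m G (\<tau> r) x z r - gp r)) =
           (\<Sum>r<n. W i r *\<^sub>R (y r + saga_g m G (\<tau>' r) x z' r - gp' r))" for i
    using agree g by (intro sum.cong) auto
  show ?thesis
    using g agree assms(2) by (auto simp: states_agree_def st st' gt_step_def Let_def y')
qed

lemma gtsaga_cong:
  assumes "\<And>t i. t < k \<Longrightarrow> i < n \<Longrightarrow> tau t i = tau' t i \<and> s t i = s' t i"
  shows "states_agree n (gtsaga n m W G \<alpha> x0 tau s k) (gtsaga n m W G \<alpha> x0 tau' s' k)"
  using assms
proof (induction k)
  case 0
  then show ?case by (simp add: states_agree_def)
next
  case (Suc k)
  then show ?case unfolding gtsaga_Suc_step by (intro gt_step_cong) auto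
qed

lemma state_t_cong: "states_agree n st st' \<Longrightarrow> state_t n m st = state_t n m st'"
  unfolding state_t_def states_agree_def by auto

lemma avg_add: "avg n (\<lambda>i. a i + b i) = avg n a + avg n b"
  by (simp add: avg_def sum.distrib scaleR_add_right)

lemma avg_diff: "avg n (\<lambda>i. a i - b i) = avg n a - avg n b"
  by (simp add: avg_def sum_subtractf scaleR_diff_right)

lemma avg_scaleR: "avg n (\<lambda>i. c *\<^sub>R a i) = c *\<^sub>R avg n a"
  by (simp add: avg_def scaleR_sum_right)

lemma avg_mix_column_stochastic:
  assumes "\<And>r. r < n \<Longrightarrow> (\<Sum>i<n. W i r) = 1"
  shows "avg n (\<lambda>i. \<Sum>r<n. W i r *\<^sub>R v r) = avg n v"
proof -
  have "(\<Sum>i<n. \<Sum>r<n. W i r *\<^sub>R v r) = (\<Sum>r<n. (\<Sum>i<n. W i r) *\<^sub>R v r)"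
    by (subst sum.swap) (simp add: scaleR_sum_left)
  then show ?thesis using assms by (simp add: avg_def)
qed

definition tracks_gradient :: "nat \<Rightarrow> 'v::real_vector gt_state \<Rightarrow> bool" where
  "tracks_gradient n st \<longleftrightarrow> avg n (fst (snd st)) = avg n (fst (snd (snd st)))"

lemma gt_step_tracks_gradient:
  assumes W: "\<And>r. r < n \<Longrightarrow> (\<Sum>i<n. W i r) = 1" and tracks: "tracks_gradient n (x, y, gp, z)"
  shows "tracks_gradient n (gt_step n m W G \<alpha> (x, y, gp, z) \<tau> \<sigma>)"
    and "avg n (fst (gt_step n m W G \<alpha> (x, y, gp, z) \<tau> \<sigma>)) = avg n x - \<alpha> *\<^sub>R avg n (\<lambda>i. saga_g m G (\<tau> i) x z i)"
proof -
  let ?g = "\<lambda>i. saga_g m G (\<tau> i) x z i"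
  have avg_y: "avg n (\<lambda>i. \<Sum>r<n. W i r *\<^sub>R (y r + ?g r - gp r)) = avg n ?g"
    using tracks by (simp add: avg_mix_column_stochastic[OF W] avg_add avg_diff tracks_gradient_def)
  then show "tracks_gradient n (gt_step n m W G \<alpha> (x, y, gp, z) \<tau> \<sigma>)"
    by (simp add: gt_step_def Let_def tracks_gradient_def)
  show "avg n (fst (gt_step n m W G \<alpha> (x, y, gp, z) \<tau> \<sigma>)) = avg n x - \<alpha> *\<^sub>R avg n ?g"
    using avg_y by (simp add: gt_step_def Let_def avg_mix_column_stochastic[OF W] avg_diff avg_scaleR)
qed

lemma gtsaga_tracks_gradient:
  assumes "\<And>r. r < n \<Longrightarrow> (\<Sum>i<n. W i r) = 1"
  shows "tracks_gradient n (gtsaga n m W G \<alpha> x0 tau s k)"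
proof (induction k)
  case 0
  then show ?case by (simp add: tracks_gradient_def)
next
  case (Suc k)
  then show ?case
    using gt_step_tracks_gradient(1)[OF assms] unfolding gtsaga_Suc_step
    by (cases "gtsaga n m W G \<alpha> x0 tau s k") auto
qed

definition local_grad :: "nat \<Rightarrow> (nat \<Rightarrow> nat \<Rightarrow> 'v \<Rightarrow> 'v::real_vector) \<Rightarrow> nat \<Rightarrow> 'v \<Rightarrow> 'v" where
  "local_grad m G i v = (1 / real m) *\<^sub>R (\<Sum>j<m. G i j v)"

lemma avg_grad_eq_avg_local_grad: "avg_grad n m G x = avg n (\<lambda>i. local_grad m G i (x i))"
  by (simp add: avg_grad_def local_grad_def)

lemma saga_g_minus_local_grad:
  "saga_g m G a x z i - local_grad m G i (x i)
     = (G i a (x i) - G i a (z i a)) - (1 / real m) *\<^sub>R (\<Sum>b<m. G i b (x i) - G i b (z i b))"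
  by (simp add: saga_g_def local_grad_def sum_subtractf scaleR_diff_right)

lemma sum_saga_g_minus_local_grad:
  assumes "m \<ge> 1"
  shows "(\<Sum>a<m. saga_g m G a x z i - local_grad m G i (x i)) = 0"
  using assms by (simp add: saga_g_minus_local_grad sum_subtractf sum_constant_scaleR)

lemma sum_norm_power2_saga_g_error_le:
  fixes x :: "nat \<Rightarrow> 'v::real_inner" and c :: 'v
  assumes smooth: "\<And>j a b. j < m \<Longrightarrow> norm (G i j a - G i j b) \<le> L * norm (a - b)"
  shows "(\<Sum>a<m. (norm (saga_g m G a x z i - local_grad m G i (x i)))\<^sup>2)
     \<le> 2 * L\<^sup>2 * (real m * (norm (x i - c))\<^sup>2 + (\<Sum>a<m. (norm (c - z i a))\<^sup>2))"
proof -
  let ?e = "\<lambda>a. G i a (x i) - G i a (z i a)"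
  have "(\<Sum>a<m. (norm (saga_g m G a x z i - local_grad m G i (x i)))\<^sup>2) \<le> (\<Sum>a<m. (norm (?e a))\<^sup>2)"
    using sum_norm_power2_centered_le[of ?e m] by (simp add: saga_g_minus_local_grad)
  also have "\<dots> \<le> (\<Sum>a<m. L\<^sup>2 * (2 * (norm (x i - c))\<^sup>2 + 2 * (norm (c - z i a))\<^sup>2))"
  proof (intro sum_mono)
    fix a assume "a \<in> {..<m}"
    then have "(norm (?e a))\<^sup>2 \<le> (L * norm ((x i - c) - (z i a - c)))\<^sup>2"
      using smooth by (intro power_mono) (auto intro: order_trans[OF norm_ge_zero])
    also have "\<dots> \<le> L\<^sup>2 * (2 * (norm (x i - c))\<^sup>2 + 2 * (norm (z i a - c))\<^sup>2)"
      unfolding power_mult_distrib by (intro mult_left_mono norm_diff_power2_le) simp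
    finally show "(norm (?e a))\<^sup>2 \<le> L\<^sup>2 * (2 * (norm (x i - c))\<^sup>2 + 2 * (norm (c - z i a))\<^sup>2)"
      by (simp add: norm_minus_commute)
  qed
  also have "\<dots> = 2 * L\<^sup>2 * (real m * (norm (x i - c))\<^sup>2 + (\<Sum>a<m. (norm (c - z i a))\<^sup>2))"
    by (simp add: sum.distrib sum_distrib_left algebra_simps)
  finally show ?thesis .
qed

lemma average_sample_norm_power2:
  fixes x :: "nat \<Rightarrow> 'v::real_inner" and c :: 'v
  assumes n: "n \<ge> 1" and m: "m \<ge> 1"
  shows "(1 / real m) ^ n * (\<Sum>\<tau>\<in>PiE {..<n} (\<lambda>_. {..<m}).
            (norm (avg n x - \<alpha> *\<^sub>R avg n (\<lambda>i. saga_g m G (\<tau> i) x z i) - c))\<^sup>2)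
     = (norm (avg n x - \<alpha> *\<^sub>R avg_grad n m G x - c))\<^sup>2
       + (\<alpha> / real n)\<^sup>2 / real m * (\<Sum>i<n. \<Sum>a<m. (norm (saga_g m G a x z i - local_grad m G i (x i)))\<^sup>2)"
proof -
  define d where "d i a = saga_g m G a x z i - local_grad m G i (x i)" for i a
  have split: "avg n x - \<alpha> *\<^sub>R avg n (\<lambda>i. saga_g m G (\<tau> i) x z i) - c
      = (avg n x - \<alpha> *\<^sub>R avg_grad n m G x - c) - (\<alpha> / real n) *\<^sub>R (\<Sum>i<n. d i (\<tau> i))" for \<tau>
  proof -
    have "(\<lambda>i. saga_g m G (\<tau> i) x z i) = (\<lambda>i. local_grad m G i (x i) + d i (\<tau> i))"
      by (simp add: d_def)
    then have "avg n (\<lambda>i. saga_g m G (\<tau> i) x z i) = avg_grad n m G x + (1 / real n) *\<^sub>R (\<Sum>i<n. d i (\<tau> i))"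
      by (simp add: avg_add avg_grad_eq_avg_local_grad avg_def)
    then show ?thesis by (simp add: algebra_simps)
  qed
  let ?A = "(norm (avg n x - \<alpha> *\<^sub>R avg_grad n m G x - c))\<^sup>2"
  let ?S = "\<Sum>i<n. \<Sum>a<m. (norm (d i a))\<^sup>2"
  have "(\<Sum>\<tau>\<in>PiE {..<n} (\<lambda>_. {..<m}). (norm (avg n x - \<alpha> *\<^sub>R avg n (\<lambda>i. saga_g m G (\<tau> i) x z i) - c))\<^sup>2)
      = real m ^ n * ?A + (\<alpha> / real n)\<^sup>2 * real m ^ (n - 1) * ?S"
    unfolding split
    by (rule sum_PiE_norm_power2_zero_mean) (simp add: d_def sum_saga_g_minus_local_grad[OF m])
  moreover have "(1 / real m) ^ n * (real m ^ n * ?A + (\<alpha> / real n)\<^sup>2 * real m ^ (n - 1) * ?S)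
      = ((1 / real m) ^ n * real m ^ n) * ?A + (\<alpha> / real n)\<^sup>2 * ?S * ((1 / real m) ^ n * real m ^ (n - 1))"
    by (simp add: algebra_simps)
  moreover have "(1 / real m) ^ n * real m ^ n = 1" "(1 / real m) ^ n * real m ^ (n - 1) = 1 / real m"
    using m n by (simp_all add: power_one_over power_diff)
  ultimately show ?thesis by (simp add: d_def)
qed

lemma average_fresh_table_state_t:
  fixes x :: "nat \<Rightarrow> 'v::real_inner" and G :: "nat \<Rightarrow> nat \<Rightarrow> 'v \<Rightarrow> 'v"
    and \<alpha> :: real and \<tau> :: "nat \<Rightarrow> nat"
  assumes n: "n \<ge> 1" and m: "m \<ge> 1"
    and W: "\<And>r. r < n \<Longrightarrow> (\<Sum>i<n. W i r) = 1" and tracks: "tracks_gradient n (x, y, gp, z)"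
  defines "w \<equiv> avg n x - \<alpha> *\<^sub>R avg n (\<lambda>i. saga_g m G (\<tau> i) x z i)"
  shows "(1 / real m) ^ n * (\<Sum>\<sigma>\<in>PiE {..<n} (\<lambda>_. {..<m}). state_t n m (gt_step n m W G \<alpha> (x, y, gp, z) \<tau> \<sigma>))
    = 1 / (real n * real m ^ 2) * (\<Sum>i<n. \<Sum>j<m. (norm (w - x i))\<^sup>2 + (real m - 1) * (norm (w - z i j))\<^sup>2)"
proof -
  let ?P = "PiE {..<n} (\<lambda>_. {..<m})"
  let ?dist = "\<lambda>i j a. (norm (w - (if j = a then x i else z i j)))\<^sup>2"
  have state_t_step: "state_t n m (gt_step n m W G \<alpha> (x, y, gp, z) \<tau> \<sigma>)
      = (1 / real n) * (\<Sum>i<n. (1 / real m) * (\<Sum>j<m. ?dist i j (\<sigma> i)))" for \<sigma>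
    using gt_step_tracks_gradient(2)[OF W tracks] by (simp add: state_t_def gt_step_def Let_def w_def)
  have fresh_entry: "(\<Sum>a<m. ?dist i j a) = (norm (w - x i))\<^sup>2 + (real m - 1) * (norm (w - z i j))\<^sup>2"
    if "j < m" for i j
  proof -
    have "(\<Sum>a<m. ?dist i j a) = (\<Sum>a<m. if j = a then (norm (w - x i))\<^sup>2 else (norm (w - z i j))\<^sup>2)"
      by (intro sum.cong) auto
    moreover have "{..<m} \<inter> {a. j = a} = {j}" "{..<m} \<inter> - {a. j = a} = {..<m} - {j}" using that by auto
    ultimately show ?thesis
      using that m by (simp add: sum.If_cases card_Diff_singleton of_nat_diff)
  qed
  have "(\<Sum>\<sigma>\<in>?P. state_t n m (gt_step n m W G \<alpha> (x, y, gp, z) \<tau> \<sigma>))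
      = (1 / real n) * (\<Sum>i<n. (1 / real m) * (\<Sum>j<m. \<Sum>\<sigma>\<in>?P. ?dist i j (\<sigma> i)))"
    unfolding state_t_step by (simp add: sum_distrib_left sum.swap[of _ ?P])
  also have "\<dots> = (1 / real n) * (\<Sum>i<n. (1 / real m) * (\<Sum>j<m. real m ^ (n - 1) * (\<Sum>a<m. ?dist i j a)))"
    by (intro arg_cong2[where f = "(*)"] sum.cong refl) (use sum_PiE_eval[of "{..<n}" _ "{..<m}"] in simp)
  also have "\<dots> = real m ^ (n - 1) / (real n * real m)
      * (\<Sum>i<n. \<Sum>j<m. (norm (w - x i))\<^sup>2 + (real m - 1) * (norm (w - z i j))\<^sup>2)"
    by (simp add: fresh_entry sum_distrib_left)
  finally show ?thesis
    using m n by (simp add: power_one_over power_diff power2_eq_square)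
qed

lemma state_t_nonneg: "state_t n m st \<ge> 0"
  by (auto simp: state_t_def intro!: sum_nonneg divide_nonneg_nonneg)

lemma sum_norm_power2_avg_minus_table:
  assumes "n \<ge> 1" "m \<ge> 1"
  shows "(\<Sum>i<n. \<Sum>j<m. (norm (avg n x - z i j))\<^sup>2) = real n * real m * state_t n m (x, y, gp, z)"
  using assms by (simp add: state_t_def sum_distrib_left)

lemma saga_error_term_le:
  fixes x y gp :: "nat \<Rightarrow> 'v::real_inner" and z :: "nat \<Rightarrow> nat \<Rightarrow> 'v"
  assumes n: "n \<ge> 1" and m: "m \<ge> 1"
    and smooth: "\<And>i j a b. i < n \<Longrightarrow> j < m \<Longrightarrow> norm (G i j a - G i j b) \<le> L * norm (a - b)"
    and step_size: "\<alpha>\<^sup>2 * L\<^sup>2 \<le> real n / (8 * real m)"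
  shows "(\<alpha> / real n)\<^sup>2 / real m * (\<Sum>i<n. \<Sum>a<m. (norm (saga_g m G a x z i - local_grad m G i (x i)))\<^sup>2)
     \<le> consensus_err n x / (4 * real m * real n) + state_t n m (x, y, gp, z) / (4 * real m)"
proof -
  define T where "T = state_t n m (x, y, gp, z)"
  define Cn where "Cn = consensus_err n x"
  have mpos: "real m > 0" and npos: "real n > 0" using m n by auto
  have "T \<ge> 0" "Cn \<ge> 0"
    by (auto simp: T_def state_t_nonneg Cn_def consensus_err_def intro!: sum_nonneg)
  have "(\<Sum>i<n. \<Sum>a<m. (norm (saga_g m G a x z i - local_grad m G i (x i)))\<^sup>2)
      \<le> (\<Sum>i<n. 2 * L\<^sup>2 * (real m * (norm (x i - avg n x))\<^sup>2 + (\<Sum>a<m. (norm (avg n x - z i a))\<^sup>2)))"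
    using smooth by (intro sum_mono sum_norm_power2_saga_g_error_le) auto
  also have "\<dots> = 2 * L\<^sup>2 * real m * (Cn + real n * T)"
    using sum_norm_power2_avg_minus_table[OF n m, where x = x and z = z and y = y and gp = gp]
    by (simp add: sum.distrib sum_distrib_left[symmetric] Cn_def T_def consensus_err_def algebra_simps)
  finally have "(\<alpha> / real n)\<^sup>2 / real m * (\<Sum>i<n. \<Sum>a<m. (norm (saga_g m G a x z i - local_grad m G i (x i)))\<^sup>2)
      \<le> (\<alpha> / real n)\<^sup>2 / real m * (2 * L\<^sup>2 * real m * (Cn + real n * T))"
    using mpos by (intro mult_left_mono) auto
  also have "\<dots> = 2 * (\<alpha>\<^sup>2 * L\<^sup>2) * (Cn + real n * T) / (real n)\<^sup>2"
    using mpos npos by (simp add: power_divide field_simps)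
  also have "\<dots> \<le> 2 * (real n / (8 * real m)) * (Cn + real n * T) / (real n)\<^sup>2"
    using step_size \<open>T \<ge> 0\<close> \<open>Cn \<ge> 0\<close> by (intro divide_right_mono mult_right_mono mult_left_mono) auto
  also have "\<dots> = Cn / (4 * real m * real n) + T / (4 * real m)"
    using mpos npos by (simp add: field_simps power2_eq_square)
  finally show ?thesis by (simp add: T_def Cn_def)
qed

lemma average_state_t_step_eq:
  fixes x y gp :: "nat \<Rightarrow> 'v::real_inner" and z :: "nat \<Rightarrow> nat \<Rightarrow> 'v"
    and G :: "nat \<Rightarrow> nat \<Rightarrow> 'v \<Rightarrow> 'v" and \<alpha> :: real
  assumes n: "n \<ge> 1" and m: "m \<ge> 1"
    and W: "\<And>r. r < n \<Longrightarrow> (\<Sum>i<n. W i r) = 1" and tracks: "tracks_gradient n (x, y, gp, z)"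
  defines "E \<equiv> \<lambda>c. (1 / real m) ^ n
      * (\<Sum>\<tau>\<in>PiE {..<n} (\<lambda>_. {..<m}). (norm (avg n x - \<alpha> *\<^sub>R avg n (\<lambda>i. saga_g m G (\<tau> i) x z i) - c))\<^sup>2)"
  shows "(1 / real m) ^ (2 * n) * (\<Sum>\<tau>\<in>PiE {..<n} (\<lambda>_. {..<m}). \<Sum>\<sigma>\<in>PiE {..<n} (\<lambda>_. {..<m}).
      state_t n m (gt_step n m W G \<alpha> (x, y, gp, z) \<tau> \<sigma>))
     = 1 / (real n * real m ^ 2) * (\<Sum>i<n. \<Sum>j<m. E (x i) + (real m - 1) * E (z i j))"
proof -
  let ?P = "PiE {..<n} (\<lambda>_. {..<m})"
  define w where "w \<tau> = avg n x - \<alpha> *\<^sub>R avg n (\<lambda>i. saga_g m G (\<tau> i) x z i)" for \<tau>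
  have fresh: "(1 / real m) ^ n * (\<Sum>\<sigma>\<in>?P. state_t n m (gt_step n m W G \<alpha> (x, y, gp, z) \<tau> \<sigma>))
      = 1 / (real n * real m ^ 2)
        * (\<Sum>i<n. \<Sum>j<m. (norm (w \<tau> - x i))\<^sup>2 + (real m - 1) * (norm (w \<tau> - z i j))\<^sup>2)" for \<tau>
    unfolding w_def by (rule average_fresh_table_state_t[OF n m W tracks])
  have swap: "(\<Sum>\<tau>\<in>?P. \<Sum>i<n. \<Sum>j<m. F \<tau> i j) = (\<Sum>i<n. \<Sum>j<m. \<Sum>\<tau>\<in>?P. F \<tau> i j)"
    for F :: "(nat \<Rightarrow> nat) \<Rightarrow> nat \<Rightarrow> nat \<Rightarrow> real"
    by (subst sum.swap) (rule sum.cong[OF refl], rule sum.swap)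
  have E_terms: "E (x i) + (real m - 1) * E (z i j) = (1 / real m) ^ n
      * (\<Sum>\<tau>\<in>?P. (norm (w \<tau> - x i))\<^sup>2 + (real m - 1) * (norm (w \<tau> - z i j))\<^sup>2)" for i j
    by (simp add: E_def w_def sum.distrib sum_distrib_left distrib_left mult.left_commute)
  have "(1 / real m) ^ (2 * n) * (\<Sum>\<tau>\<in>?P. \<Sum>\<sigma>\<in>?P. state_t n m (gt_step n m W G \<alpha> (x, y, gp, z) \<tau> \<sigma>))
      = (1 / real m) ^ n * (\<Sum>\<tau>\<in>?P. (1 / real m) ^ n * (\<Sum>\<sigma>\<in>?P. state_t n m (gt_step n m W G \<alpha> (x, y, gp, z) \<tau> \<sigma>)))"
    by (simp add: mult_2 power_add sum_distrib_left mult.assoc)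
  also have "\<dots> = 1 / (real n * real m ^ 2) * (\<Sum>i<n. \<Sum>j<m. (1 / real m) ^ n
      * (\<Sum>\<tau>\<in>?P. (norm (w \<tau> - x i))\<^sup>2 + (real m - 1) * (norm (w \<tau> - z i j))\<^sup>2))"
    unfolding fresh by (simp only: sum_distrib_left[symmetric] swap) (simp add: ac_simps)
  finally show ?thesis by (simp only: E_terms)
qed

lemma average_state_t_step_le:
  fixes x y gp :: "nat \<Rightarrow> 'v::real_inner" and z :: "nat \<Rightarrow> nat \<Rightarrow> 'v"
  assumes n: "n \<ge> 1" and m: "m \<ge> 1"
    and W: "\<And>r. r < n \<Longrightarrow> (\<Sum>i<n. W i r) = 1" and tracks: "tracks_gradient n (x, y, gp, z)"
    and smooth: "\<And>i j a b. i < n \<Longrightarrow> j < m \<Longrightarrow> norm (G i j a - G i j b) \<le> L * norm (a - b)"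
    and step_size: "\<alpha>\<^sup>2 * L\<^sup>2 \<le> real n / (8 * real m)"
  shows "(1 / real m) ^ (2 * n) * (\<Sum>\<tau>\<in>PiE {..<n} (\<lambda>_. {..<m}). \<Sum>\<sigma>\<in>PiE {..<n} (\<lambda>_. {..<m}).
            state_t n m (gt_step n m W G \<alpha> (x, y, gp, z) \<tau> \<sigma>))
     \<le> 2 * state_t n m (x, y, gp, z) + 3 * \<alpha>\<^sup>2 * (norm (avg_grad n m G x))\<^sup>2
       + 9 / (4 * real m * real n) * consensus_err n x"
proof -
  define xb where "xb = avg n x"
  define T where "T = state_t n m (x, y, gp, z)"
  define Cn where "Cn = consensus_err n x"
  define c where "c = Cn / (real m * real n)"
  define t where "t = T / real m"
  define A where "A = \<alpha>\<^sup>2 * (norm (avg_grad n m G x))\<^sup>2"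
  define K where "K = (\<alpha> / real n)\<^sup>2 / real m
    * (\<Sum>i<n. \<Sum>a<m. (norm (saga_g m G a x z i - local_grad m G i (x i)))\<^sup>2)"
  define E where "E c = (1 / real m) ^ n * (\<Sum>\<tau>\<in>PiE {..<n} (\<lambda>_. {..<m}).
    (norm (xb - \<alpha> *\<^sub>R avg n (\<lambda>i. saga_g m G (\<tau> i) x z i) - c))\<^sup>2)" for c
  have mpos: "real m > 0" and npos: "real n > 0" using m n by auto
  have E_le: "E c \<le> 2 * (norm (xb - c))\<^sup>2 + 2 * A + K" for c
  proof -
    have "E c = (norm ((xb - c) - \<alpha> *\<^sub>R avg_grad n m G x))\<^sup>2 + K"
      unfolding E_def K_def xb_def using average_sample_norm_power2[OF n m] by (simp add: algebra_simps)
    also have "\<dots> \<le> 2 * (norm (xb - c))\<^sup>2 + 2 * (norm (\<alpha> *\<^sub>R avg_grad n m G x))\<^sup>2 + K"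
      by (rule add_right_mono[OF norm_diff_power2_le])
    finally show ?thesis by (simp add: A_def power_mult_distrib)
  qed
  have "(1 / real m) ^ (2 * n) * (\<Sum>\<tau>\<in>PiE {..<n} (\<lambda>_. {..<m}). \<Sum>\<sigma>\<in>PiE {..<n} (\<lambda>_. {..<m}).
          state_t n m (gt_step n m W G \<alpha> (x, y, gp, z) \<tau> \<sigma>))
      = 1 / (real n * real m ^ 2) * (\<Sum>i<n. \<Sum>j<m. E (x i) + (real m - 1) * E (z i j))"
    unfolding E_def xb_def by (rule average_state_t_step_eq[OF n m W tracks])
  also have "\<dots> \<le> 1 / (real n * real m ^ 2) * (\<Sum>i<n. \<Sum>j<m. 2 * (norm (xb - x i))\<^sup>2
      + (real m - 1) * (2 * (norm (xb - z i j))\<^sup>2) + real m * (2 * A + K))"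
  proof (intro mult_left_mono sum_mono)
    fix i j
    have "(real m - 1) * E (z i j) \<le> (real m - 1) * (2 * (norm (xb - z i j))\<^sup>2 + 2 * A + K)"
      using m by (intro mult_left_mono E_le) auto
    then show "E (x i) + (real m - 1) * E (z i j) \<le> 2 * (norm (xb - x i))\<^sup>2
        + (real m - 1) * (2 * (norm (xb - z i j))\<^sup>2) + real m * (2 * A + K)"
      using E_le[of "x i"] by (simp add: algebra_simps)
  qed simp
  also have "\<dots> = 2 * c + 2 * T - 2 * t + 2 * A + K"
  proof -
    have "(\<Sum>i<n. (norm (xb - x i))\<^sup>2) = Cn"
      by (simp add: Cn_def consensus_err_def xb_def norm_minus_commute)
    then have "(\<Sum>i<n. \<Sum>j<m. 2 * (norm (xb - x i))\<^sup>2 + (real m - 1) * (2 * (norm (xb - z i j))\<^sup>2)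
        + real m * (2 * A + K))
        = 2 * real m * Cn + 2 * (real m - 1) * (real n * real m * T) + real n * real m * real m * (2 * A + K)"
      using sum_norm_power2_avg_minus_table[OF n m, where x = x and z = z and y = y and gp = gp]
      by (simp add: sum.distrib sum_distrib_left[symmetric] T_def xb_def)
    then show ?thesis
      using mpos npos by (simp add: c_def t_def field_simps power2_eq_square)
  qed
  also have "\<dots> \<le> 2 * T + 3 * A + 9 / 4 * c"
  proof -
    have "K \<le> c / 4 + t / 4"
      using saga_error_term_le[OF n m smooth step_size, where x = x and z = z and y = y and gp = gp]
      by (simp add: K_def c_def Cn_def t_def T_def field_simps)
    moreover have "t \<ge> 0" "A \<ge> 0" by (simp_all add: t_def T_def state_t_nonneg A_def)
    ultimately show ?thesis by linarith
  qed
  finally show ?thesis by (simp add: T_def A_def c_def Cn_def field_simps)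
qed

section \<open>The sampling model\<close>

locale gt_sampling =
  fixes n m :: nat and M :: "'w measure" and tau s :: "nat \<Rightarrow> nat \<Rightarrow> 'w \<Rightarrow> nat" and k :: nat
  assumes n: "n \<ge> 1" and m: "m \<ge> 1"
    and prob: "prob_space M"
    and indep: "prob_space.indep_vars M (\<lambda>_. count_space UNIV)
                  (\<lambda>(b, k, i). if b then tau k i else s k i) (UNIV \<times> UNIV \<times> {..<n})"
    and uniform_tau: "\<And>k i j. i < n \<Longrightarrow> j < m \<Longrightarrow> measure M {\<omega> \<in> space M. tau k i \<omega> = j} = 1 / real m"
    and uniform_s: "\<And>k i j. i < n \<Longrightarrow> j < m \<Longrightarrow> measure M {\<omega> \<in> space M. s k i \<omega> = j} = 1 / real m"
begin

sublocale prob_space M by (rule prob)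

abbreviation sample :: "bool \<times> nat \<times> nat \<Rightarrow> 'w \<Rightarrow> nat" where
  "sample \<equiv> \<lambda>(b, k, i). if b then tau k i else s k i"

lemma sample_measurable:
  assumes "i < n"
  shows "tau t i \<in> M \<rightarrow>\<^sub>M count_space UNIV" and "s t i \<in> M \<rightarrow>\<^sub>M count_space UNIV"
proof -
  have "sample j \<in> M \<rightarrow>\<^sub>M count_space UNIV" if "j \<in> UNIV \<times> UNIV \<times> {..<n}" for j
    using indep that by (auto simp: indep_vars_def)
  from this[of "(True, t, i)"] this[of "(False, t, i)"] assms
  show "tau t i \<in> M \<rightarrow>\<^sub>M count_space UNIV" "s t i \<in> M \<rightarrow>\<^sub>M count_space UNIV" by auto
qed

lemma sample_events:
  assumes "i < n"
  shows "{\<omega> \<in> space M. P (tau t i \<omega>)} \<in> sets M" and "{\<omega> \<in> space M. P (s t i \<omega>)} \<in> sets M"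
  using measurable_sets[OF sample_measurable(1)[OF assms], of "{a. P a}" t]
    measurable_sets[OF sample_measurable(2)[OF assms], of "{a. P a}" t]
  by (simp_all add: vimage_def Int_def conj_commute)

lemma AE_sample_less:
  assumes "i < n"
  shows "AE \<omega> in M. tau t i \<omega> < m" and "AE \<omega> in M. s t i \<omega> < m"
  using assms m by (auto intro!: AE_less_of_uniform sample_measurable uniform_tau uniform_s)

abbreviation "F \<equiv> filt M n tau s k"

definition generators :: "'w set set" where
  "generators = {X -` A \<inter> space M | X A. \<exists>t i. t < k \<and> i < n \<and> (X = tau t i \<or> X = s t i)}"

lemma sets_F: "sets F = sigma_sets (space M) generators" and space_F: "space F = space M"
proof -
  have "generators \<subseteq> Pow (space M)" unfolding generators_def by auto
  then show "sets F = sigma_sets (space M) generators" "space F = space M"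
    unfolding filt_def generators_def[symmetric] by (simp_all add: sets_measure_of space_measure_of)
qed

lemma subalgebra_F: "subalgebra M F"
proof -
  have "generators \<subseteq> sets M"
    unfolding generators_def using sample_measurable by (auto intro: measurable_sets)
  then show ?thesis
    unfolding subalgebra_def sets_F space_F by (simp add: sets.sigma_sets_subset)
qed

lemma past_sample_events_F:
  assumes "t < k" "i < n"
  shows "{\<omega> \<in> space M. P (tau t i \<omega>)} \<in> sets F" and "{\<omega> \<in> space M. P (s t i \<omega>)} \<in> sets F"
proof -
  have "tau t i -` {a. P a} \<inter> space M \<in> generators" "s t i -` {a. P a} \<inter> space M \<in> generators"
    unfolding generators_def using assms by blast+
  then show "{\<omega> \<in> space M. P (tau t i \<omega>)} \<in> sets F" "{\<omega> \<in> space M. P (s t i \<omega>)} \<in> sets F"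
    unfolding sets_F by (auto simp: vimage_def Int_def conj_commute)
qed

definition choices :: "(nat \<Rightarrow> nat) set" where
  "choices = PiE {..<n} (\<lambda>_. {..<m})"

definition histories :: "(nat \<Rightarrow> nat \<Rightarrow> nat) set" where
  "histories = PiE {..<k} (\<lambda>_. choices)"

definition history :: "'w \<Rightarrow> (nat \<Rightarrow> nat \<Rightarrow> nat) \<times> (nat \<Rightarrow> nat \<Rightarrow> nat)" where
  "history \<omega> = ((\<lambda>t\<in>{..<k}. \<lambda>i\<in>{..<n}. tau t i \<omega>), (\<lambda>t\<in>{..<k}. \<lambda>i\<in>{..<n}. s t i \<omega>))"

definition fresh :: "'w \<Rightarrow> (nat \<Rightarrow> nat) \<times> (nat \<Rightarrow> nat)" where
  "fresh \<omega> = ((\<lambda>i\<in>{..<n}. tau k i \<omega>), (\<lambda>i\<in>{..<n}. s k i \<omega>))"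

definition past_event :: "(nat \<Rightarrow> nat \<Rightarrow> nat) \<times> (nat \<Rightarrow> nat \<Rightarrow> nat) \<Rightarrow> 'w set" where
  "past_event h = {\<omega> \<in> space M. \<forall>t\<in>{..<k}. \<forall>i\<in>{..<n}. tau t i \<omega> = fst h t i \<and> s t i \<omega> = snd h t i}"

definition fresh_event :: "(nat \<Rightarrow> nat) \<times> (nat \<Rightarrow> nat) \<Rightarrow> 'w set" where
  "fresh_event v = {\<omega> \<in> space M. \<forall>i\<in>{..<n}. tau k i \<omega> = fst v i \<and> s k i \<omega> = snd v i}"

lemma past_event_F: "past_event h \<in> sets F"
proof -
  have "{\<omega> \<in> space F. \<forall>t\<in>{..<k}. \<forall>i\<in>{..<n}. tau t i \<omega> = fst h t i \<and> s t i \<omega> = snd h t i} \<in> sets F"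
    by (intro sets.sets_Collect_finite_All sets.sets_Collect_conj) (auto simp: space_F intro: past_sample_events_F)
  then show ?thesis unfolding past_event_def space_F .
qed

lemma fresh_event_M: "fresh_event v \<in> sets M"
  unfolding fresh_event_def
  by (intro sets.sets_Collect_finite_All sets.sets_Collect_conj sample_events) auto

lemma history_eq_iff:
  assumes "\<omega> \<in> space M" "fst h \<in> PiE {..<k} (\<lambda>_. PiE {..<n} B)" "snd h \<in> PiE {..<k} (\<lambda>_. PiE {..<n} B)"
  shows "history \<omega> = h \<longleftrightarrow> \<omega> \<in> past_event h"
  using assms by (cases h) (simp add: history_def past_event_def restrict2_eq_PiE_iff ball_conj_distrib)

lemma fresh_eq_iff:
  assumes "\<omega> \<in> space M" "fst v \<in> PiE {..<n} B" "snd v \<in> PiE {..<n} B"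
  shows "fresh \<omega> = v \<longleftrightarrow> \<omega> \<in> fresh_event v"
  using assms by (cases v) (simp add: fresh_def fresh_event_def restrict_eq_PiE_iff ball_conj_distrib)

lemma fresh_event_eq_samples:
  "fresh_event v = {\<omega> \<in> space M. \<forall>j\<in>UNIV \<times> {k} \<times> {..<n}.
     sample j \<omega> = (case j of (b, t, i) \<Rightarrow> if b then fst v i else snd v i)}"
  by (auto simp: fresh_event_def all_bool_eq)

lemma fresh_event_eq_INT:
  "fresh_event v = (\<Inter>j\<in>UNIV \<times> {k} \<times> {..<n}.
     sample j -` {case j of (b, t, i) \<Rightarrow> if b then fst v i else snd v i} \<inter> space M)"
  (is "_ = (\<Inter>j\<in>?L. ?A j)")
proof
  show "fresh_event v \<subseteq> (\<Inter>j\<in>?L. ?A j)"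
    by (auto simp: fresh_event_def)
  show "(\<Inter>j\<in>?L. ?A j) \<subseteq> fresh_event v"
  proof
    fix \<omega> assume \<omega>: "\<omega> \<in> (\<Inter>j\<in>?L. ?A j)"
    have "(True, k, 0) \<in> ?L" using n by auto
    then have "\<omega> \<in> space M" using \<omega> by blast
    moreover have "tau k i \<omega> = fst v i \<and> s k i \<omega> = snd v i" if "i < n" for i
    proof -
      have "(True, k, i) \<in> ?L" "(False, k, i) \<in> ?L" using that by simp_all
      then have "\<omega> \<in> ?A (True, k, i)" "\<omega> \<in> ?A (False, k, i)" using \<omega> by blast+
      then show ?thesis by simp
    qed
    ultimately show "\<omega> \<in> fresh_event v" by (simp add: fresh_event_def)
  qed
qed

lemma prob_fresh_event:
  assumes "v \<in> choices \<times> choices"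
  shows "prob (fresh_event v) = (1 / real m) ^ (2 * n)"
proof -
  define L where "L = (UNIV :: bool set) \<times> {k} \<times> {..<n}"
  define A where "A j = sample j -` {case j of (b, t, i) \<Rightarrow> if b then fst v i else snd v i} \<inter> space M"
    for j :: "bool \<times> nat \<times> nat"
  have ind: "indep_sets (\<lambda>j. sigma_sets (space M) {sample j -` A \<inter> space M | A. A \<in> sets (count_space UNIV)})
      (UNIV \<times> UNIV \<times> {..<n})"
    using indep unfolding indep_vars_def by blast
  have L0: "(True, k, 0) \<in> L" using n by (auto simp: L_def)
  have "prob (\<Inter>j\<in>L. A j) = (\<Prod>j\<in>L. prob (A j))"
    by (rule indep_setsD[OF ind]) (use L0 in \<open>auto simp: L_def A_def\<close>)
  moreover have "fresh_event v = (\<Inter>j\<in>L. A j)"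
    unfolding fresh_event_eq_INT L_def A_def ..
  moreover have "prob (A j) = 1 / real m" if j: "j \<in> L" for j
  proof -
    obtain b i where bi: "j = (b, k, i)" "i < n" using j unfolding L_def by blast
    have "fst v \<in> choices" "snd v \<in> choices" using assms by (auto simp: mem_Times_iff)
    then have "fst v i < m" "snd v i < m" using bi(2) by (auto simp: choices_def)
    have "A j = (if b then {\<omega> \<in> space M. tau k i \<omega> = fst v i} else {\<omega> \<in> space M. s k i \<omega> = snd v i})"
      by (simp add: A_def bi vimage_def Int_def conj_commute)
    then show ?thesis
      using \<open>fst v i < m\<close> \<open>snd v i < m\<close> uniform_tau[OF bi(2)] uniform_s[OF bi(2)] by simp
  qed
  moreover have "card L = 2 * n"
    by (simp add: L_def card_cartesian_product card_UNIV_bool)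
  ultimately show ?thesis by simp
qed

lemma prob_inter_fresh_event:
  assumes A: "A \<in> sets F"
  shows "prob (A \<inter> fresh_event v) = prob A * prob (fresh_event v)"
proof -
  define K where "K = (UNIV :: bool set) \<times> {..<k} \<times> {..<n}"
  define L where "L = (UNIV :: bool set) \<times> {k} \<times> {..<n}"
  define past where "past \<omega> = restrict (\<lambda>j. sample j \<omega>) K" for \<omega>
  define now where "now \<omega> = restrict (\<lambda>j. sample j \<omega>) L" for \<omega>
  let ?\<sigma> = "\<lambda>X J. sigma_sets (space M) {X -` B \<inter> space M | B. B \<in> sets (PiM J (\<lambda>_. count_space UNIV))}"
  have "indep_var (PiM K (\<lambda>_. count_space UNIV)) past (PiM L (\<lambda>_. count_space UNIV)) now"
    unfolding past_def now_def by (rule indep_var_restrict[OF indep]) (auto simp: K_def L_def)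
  then have "indep_set (?\<sigma> past K) (?\<sigma> now L)"
    unfolding indep_var_eq by blast
  moreover have "A \<in> ?\<sigma> past K"
  proof -
    have "generators \<subseteq> ?\<sigma> past K"
    proof
      fix Z assume "Z \<in> generators"
      then obtain X B t i where Z: "Z = X -` B \<inter> space M" "t < k" "i < n" "X = tau t i \<or> X = s t i"
        unfolding generators_def by blast
      define j where "j = (X = tau t i, t, i)"
      have j: "j \<in> K" "sample j = X" using Z by (auto simp: j_def K_def)
      have "(\<lambda>f. f j) -` B \<inter> space (PiM K (\<lambda>_. count_space UNIV)) \<in> sets (PiM K (\<lambda>_. count_space UNIV))"
        by (rule measurable_sets[OF measurable_component_singleton[OF j(1)]]) simp
      moreover have "past -` ((\<lambda>f. f j) -` B \<inter> space (PiM K (\<lambda>_. count_space UNIV))) \<inter> space M = Z"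
        using j unfolding past_def Z(1) by (auto simp: space_PiM)
      ultimately show "Z \<in> ?\<sigma> past K" by blast
    qed
    then show ?thesis using A unfolding sets_F by (blast dest: sigma_sets_mono)
  qed
  moreover have "fresh_event v \<in> ?\<sigma> now L"
  proof -
    define f where "f = restrict (\<lambda>(b, t, i). if b then fst v i else snd v i) L"
    have "{f} = PiE L (\<lambda>j. {f j})" by (auto simp: f_def PiE_def extensional_def Pi_def)
    then have "{f} \<in> sets (PiM L (\<lambda>_. count_space UNIV))"
      by (simp add: sets_PiM_I_finite L_def)
    moreover have "now -` {f} \<inter> space M = fresh_event v"
      by (auto simp: now_def f_def L_def fresh_event_eq_samples restrict_eq_PiE_iff[where B = "\<lambda>_. UNIV"] all_bool_eq)
    ultimately show ?thesis by blast
  qed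
  ultimately show ?thesis by (rule indep_setD)
qed

lemma measurable_function_of_history_fresh: "(\<lambda>\<omega>. \<Psi> (history \<omega>) (fresh \<omega>)) \<in> borel_measurable M"
proof -
  define HS where "HS = PiE {..<k} (\<lambda>_. PiE {..<n} (\<lambda>_. UNIV :: nat set))"
  define FS where "FS = PiE {..<n} (\<lambda>_. UNIV :: nat set)"
  have countable: "countable ((HS \<times> HS) \<times> (FS \<times> FS))"
    unfolding HS_def FS_def by (intro countable_SIGMA countable_PiE) auto
  have "(\<lambda>\<omega>. (history \<omega>, fresh \<omega>)) \<in> M \<rightarrow>\<^sub>M count_space ((HS \<times> HS) \<times> (FS \<times> FS))"
  proof (subst measurable_count_space_eq_countable[OF countable], intro conjI ballI)
    show "(\<lambda>\<omega>. (history \<omega>, fresh \<omega>)) \<in> space M \<rightarrow> (HS \<times> HS) \<times> (FS \<times> FS)"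
      by (auto simp: history_def fresh_def HS_def FS_def)
  next
    fix a assume "a \<in> (HS \<times> HS) \<times> (FS \<times> FS)"
    then obtain T S \<tau> \<sigma> where a: "a = ((T, S), (\<tau>, \<sigma>))" and "T \<in> HS" "S \<in> HS" "\<tau> \<in> FS" "\<sigma> \<in> FS"
      by auto
    then have "(\<lambda>\<omega>. (history \<omega>, fresh \<omega>)) -` {a} \<inter> space M = past_event (T, S) \<inter> fresh_event (\<tau>, \<sigma>)"
      using history_eq_iff[of _ "(T, S)"] fresh_eq_iff[of _ "(\<tau>, \<sigma>)"]
      unfolding HS_def FS_def by (auto simp: past_event_def)
    moreover have "past_event (T, S) \<in> sets M"
      using past_event_F subalgebra_F by (auto simp: subalgebra_def)
    ultimately show "(\<lambda>\<omega>. (history \<omega>, fresh \<omega>)) -` {a} \<inter> space M \<in> sets M"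
      using fresh_event_M by auto
  qed
  from measurable_compose[OF this borel_measurable_count_space[of "case_prod \<Psi>"]]
  show ?thesis by simp
qed

lemma AE_history_fresh_in_range: "AE \<omega> in M. history \<omega> \<in> histories \<times> histories \<and> fresh \<omega> \<in> choices \<times> choices"
proof -
  have "AE \<omega> in M. \<forall>t\<in>{..k}. \<forall>i\<in>{..<n}. tau t i \<omega> < m \<and> s t i \<omega> < m"
    by (simp add: AE_finite_all AE_conj_iff AE_sample_less)
  then show ?thesis
  proof eventually_elim
    case (elim \<omega>)
    then show ?case
      unfolding history_def fresh_def histories_def choices_def mem_Times_iff fst_conv snd_conv
      by (intro conjI restrict_PiE_iff[THEN iffD2] ballI) auto
  qed
qed

lemma indicator_past_event:
  assumes "\<omega> \<in> space M" "h \<in> histories \<times> histories"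
  shows "indicator (past_event h) \<omega> = of_bool (history \<omega> = h)"
proof -
  have "fst h \<in> histories" "snd h \<in> histories" using assms(2) by (simp_all add: mem_Times_iff)
  then have "history \<omega> = h \<longleftrightarrow> \<omega> \<in> past_event h"
    unfolding histories_def choices_def by (rule history_eq_iff[OF assms(1)])
  then show ?thesis by (simp add: indicator_def)
qed

lemma indicator_fresh_event:
  assumes "\<omega> \<in> space M" "v \<in> choices \<times> choices"
  shows "indicator (fresh_event v) \<omega> = of_bool (fresh \<omega> = v)"
proof -
  have "fst v \<in> choices" "snd v \<in> choices" using assms(2) by (simp_all add: mem_Times_iff)
  then have "fresh \<omega> = v \<longleftrightarrow> \<omega> \<in> fresh_event v"
    unfolding choices_def by (rule fresh_eq_iff[OF assms(1)])
  then show ?thesis by (simp add: indicator_def)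
qed

theorem real_cond_exp_function_of_history_fresh:
  "AE \<omega> in M. real_cond_exp M F (\<lambda>\<omega>. \<Psi> (history \<omega>) (fresh \<omega>)) \<omega>
     = (1 / real m) ^ (2 * n) * (\<Sum>v\<in>choices \<times> choices. \<Psi> (history \<omega>) v)"
proof -
  have finite: "finite (histories \<times> histories)" "finite (choices \<times> choices)"
    by (simp_all add: histories_def choices_def finite_PiE)
  have past_event_M: "past_event h \<in> sets M" for h
    using past_event_F[of h] subalgebra_F by (auto simp: subalgebra_def)
  have "AE \<omega> in M. real_cond_exp M F (\<lambda>\<omega>. \<Psi> (history \<omega>) (fresh \<omega>)) \<omega>
      = (\<Sum>h\<in>histories \<times> histories. indicator (past_event h) \<omega>
          * (\<Sum>v\<in>choices \<times> choices. (1 / real m) ^ (2 * n) * \<Psi> h v))"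
  proof (rule real_cond_exp_independent_events[OF subalgebra_F finite past_event_F fresh_event_M])
    show "prob (A \<inter> fresh_event v) = prob A * (1 / real m) ^ (2 * n)"
      if "A \<in> sets F" "v \<in> choices \<times> choices" for A v
      using that by (simp add: prob_inter_fresh_event prob_fresh_event)
    show "(\<lambda>\<omega>. \<Psi> (history \<omega>) (fresh \<omega>)) \<in> borel_measurable M"
      by (rule measurable_function_of_history_fresh)
    show "AE \<omega> in M. \<Psi> (history \<omega>) (fresh \<omega>)
        = (\<Sum>h\<in>histories \<times> histories. \<Sum>v\<in>choices \<times> choices. indicator (past_event h \<inter> fresh_event v) \<omega> * \<Psi> h v)"
      using AE_history_fresh_in_range AE_space
    proof eventually_elim
      case (elim \<omega>)
      have "(\<Sum>h\<in>histories \<times> histories. \<Sum>v\<in>choices \<times> choices. indicator (past_event h \<inter> fresh_event v) \<omega> * \<Psi> h v)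
          = (\<Sum>h\<in>histories \<times> histories. \<Sum>v\<in>choices \<times> choices. of_bool (history \<omega> = h) * (of_bool (fresh \<omega> = v) * \<Psi> h v))"
        using elim by (intro sum.cong refl) (simp add: indicator_inter_arith indicator_past_event indicator_fresh_event)
      also have "\<dots> = \<Psi> (history \<omega>) (fresh \<omega>)"
        using elim finite by (simp add: sum_distrib_left[symmetric] sum_of_bool_eq_mult)
      finally show ?case ..
    qed
  qed
  then show ?thesis
    using AE_history_fresh_in_range AE_space
  proof eventually_elim
    case (elim \<omega>)
    have "(\<Sum>h\<in>histories \<times> histories. indicator (past_event h) \<omega> * (\<Sum>v\<in>choices \<times> choices. (1 / real m) ^ (2 * n) * \<Psi> h v))
        = (\<Sum>h\<in>histories \<times> histories. of_bool (history \<omega> = h) * (\<Sum>v\<in>choices \<times> choices. (1 / real m) ^ (2 * n) * \<Psi> h v))"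
      using elim by (intro sum.cong refl) (simp add: indicator_past_event)
    also have "\<dots> = (\<Sum>v\<in>choices \<times> choices. (1 / real m) ^ (2 * n) * \<Psi> (history \<omega>) v)"
      using elim by (intro sum_of_bool_eq_mult finite(1)) auto
    also have "\<dots> = (1 / real m) ^ (2 * n) * (\<Sum>v\<in>choices \<times> choices. \<Psi> (history \<omega>) v)"
      by (simp add: sum_distrib_left)
    finally show ?case using elim by simp
  qed
qed

lemma gtsaga_agrees_history:
  "states_agree n (gtsaga n m W G \<alpha> x0 (\<lambda>t i. tau t i \<omega>) (\<lambda>t i. s t i \<omega>) k)
     (gtsaga n m W G \<alpha> x0 (fst (history \<omega>)) (snd (history \<omega>)) k)"
  by (intro gtsaga_cong) (simp add: history_def)

lemma gt_t_Suc_eq_history_fresh: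
  "gt_t n m W G \<alpha> x0 (\<lambda>t i. tau t i \<omega>) (\<lambda>t i. s t i \<omega>) (Suc k)
     = state_t n m (gt_step n m W G \<alpha> (gtsaga n m W G \<alpha> x0 (fst (history \<omega>)) (snd (history \<omega>)) k)
         (fst (fresh \<omega>)) (snd (fresh \<omega>)))"
  unfolding gt_t_eq_state_t gtsaga_Suc_step
  by (intro state_t_cong gt_step_cong gtsaga_agrees_history) (simp add: fresh_def)

theorem AE_real_cond_exp_gt_t_Suc_le:
  fixes G :: "nat \<Rightarrow> nat \<Rightarrow> 'v::real_inner \<Rightarrow> 'v"
  assumes W: "\<And>r. r < n \<Longrightarrow> (\<Sum>i<n. W i r) = 1"
    and smooth: "\<And>i j a b. i < n \<Longrightarrow> j < m \<Longrightarrow> norm (G i j a - G i j b) \<le> L * norm (a - b)"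
    and step_size: "\<alpha>\<^sup>2 * L\<^sup>2 \<le> real n / (8 * real m)"
  shows "AE \<omega> in M.
     real_cond_exp M F (\<lambda>\<omega>. gt_t n m W G \<alpha> x0 (\<lambda>t i. tau t i \<omega>) (\<lambda>t i. s t i \<omega>) (Suc k)) \<omega>
     \<le> 2 * gt_t n m W G \<alpha> x0 (\<lambda>t i. tau t i \<omega>) (\<lambda>t i. s t i \<omega>) k
       + 3 * \<alpha>\<^sup>2 * (norm (avg_grad n m G (gt_x n m W G \<alpha> x0 (\<lambda>t i. tau t i \<omega>) (\<lambda>t i. s t i \<omega>) k)))\<^sup>2
       + 9 / (4 * real m * real n) * consensus_err n (gt_x n m W G \<alpha> x0 (\<lambda>t i. tau t i \<omega>) (\<lambda>t i. s t i \<omega>) k)"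
proof -
  define \<Psi> where "\<Psi> h v = state_t n m (gt_step n m W G \<alpha> (gtsaga n m W G \<alpha> x0 (fst h) (snd h) k) (fst v) (snd v))"
    for h v
  have next_t: "(\<lambda>\<omega>. gt_t n m W G \<alpha> x0 (\<lambda>t i. tau t i \<omega>) (\<lambda>t i. s t i \<omega>) (Suc k))
      = (\<lambda>\<omega>. \<Psi> (history \<omega>) (fresh \<omega>))"
    by (simp add: \<Psi>_def gt_t_Suc_eq_history_fresh)
  show ?thesis
    unfolding next_t using real_cond_exp_function_of_history_fresh[of \<Psi>]
  proof eventually_elim
    case (elim \<omega>)
    obtain x y gp z where state: "gtsaga n m W G \<alpha> x0 (fst (history \<omega>)) (snd (history \<omega>)) k = (x, y, gp, z)"
      by (cases "gtsaga n m W G \<alpha> x0 (fst (history \<omega>)) (snd (history \<omega>)) k") auto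
    have agree: "states_agree n (gtsaga n m W G \<alpha> x0 (\<lambda>t i. tau t i \<omega>) (\<lambda>t i. s t i \<omega>) k) (x, y, gp, z)"
      using gtsaga_agrees_history[of W G \<alpha> x0 \<omega>] state by simp
    have "tracks_gradient n (gtsaga n m W G \<alpha> x0 (fst (history \<omega>)) (snd (history \<omega>)) k)"
      by (rule gtsaga_tracks_gradient[OF W])
    then have tracks: "tracks_gradient n (x, y, gp, z)" by (simp only: state)
    have "(\<Sum>v\<in>choices \<times> choices. \<Psi> (history \<omega>) v)
        = (\<Sum>\<tau>\<in>choices. \<Sum>\<sigma>\<in>choices. state_t n m (gt_step n m W G \<alpha> (x, y, gp, z) \<tau> \<sigma>))"
      by (simp add: \<Psi>_def state sum.cartesian_product split_def)
    then have "(1 / real m) ^ (2 * n) * (\<Sum>v\<in>choices \<times> choices. \<Psi> (history \<omega>) v)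
        \<le> 2 * state_t n m (x, y, gp, z) + 3 * \<alpha>\<^sup>2 * (norm (avg_grad n m G x))\<^sup>2
          + 9 / (4 * real m * real n) * consensus_err n x"
      unfolding choices_def using average_state_t_step_le[OF n m W tracks smooth step_size] by simp
    moreover have "gt_x n m W G \<alpha> x0 (\<lambda>t i. tau t i \<omega>) (\<lambda>t i. s t i \<omega>) k = x"
      using agree by (simp add: gt_x_def states_agree_def)
    ultimately show ?case
      using elim state_t_cong[OF agree] by (simp add: gt_t_eq_state_t)
  qed
qed

end

lemma step_size_condition:
  assumes "L > 0" "m \<ge> 1" "0 < \<alpha>" "\<alpha> \<le> sqrt (real n) / (sqrt (8 * real m) * L)"
  shows "\<alpha>\<^sup>2 * L\<^sup>2 \<le> real n / (8 * real m)"
proof -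
  have pos: "sqrt (8 * real m) * L > 0" using assms(1,2) by simp
  then have "\<alpha> * (sqrt (8 * real m) * L) \<le> sqrt (real n)"
    using assms(4) by (simp add: pos_le_divide_eq)
  then have "(\<alpha> * (sqrt (8 * real m) * L))\<^sup>2 \<le> (sqrt (real n))\<^sup>2"
    using assms(3) pos by (intro power_mono) simp_all
  then have "\<alpha>\<^sup>2 * L\<^sup>2 * (8 * real m) \<le> real n"
    by (simp add: power_mult_distrib mult_ac)
  then show ?thesis using assms(2) by (simp add: field_simps)
qed

theorem corollary2:
  fixes n m :: nat and L \<alpha> :: real
    and f :: "nat \<Rightarrow> nat \<Rightarrow> 'v::euclidean_space \<Rightarrow> real"
    and G :: "nat \<Rightarrow> nat \<Rightarrow> 'v \<Rightarrow> 'v"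
    and W :: "nat \<Rightarrow> nat \<Rightarrow> real"
    and x0 :: 'v
    and M :: "'w measure"
    and tau s :: "nat \<Rightarrow> nat \<Rightarrow> 'w \<Rightarrow> nat"
  assumes n: "n \<ge> 1" and m: "m \<ge> 1"
    and grad: "\<And>i j x. i < n \<Longrightarrow> j < m \<Longrightarrow> (f i j has_derivative (\<lambda>h. G i j x \<bullet> h)) (at x)"
    and L: "L > 0"
    and smooth: "\<And>i j x y. i < n \<Longrightarrow> j < m \<Longrightarrow> norm (G i j x - G i j y) \<le> L * norm (x - y)"
    and Fbdd: "bdd_below (range (\<lambda>x. (1 / real n) * (\<Sum>i<n. (1 / real m) * (\<Sum>j<m. f i j x))))"
    and Wnn: "\<And>i r. i < n \<Longrightarrow> r < n \<Longrightarrow> W i r \<ge> 0"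
    and Wprim: "primitive_mat n W"
    and Wds: "doubly_stochastic n W"
    and prob: "prob_space M"
    and indep: "prob_space.indep_vars M (\<lambda>_. count_space UNIV)
                  (\<lambda>(b, k, i). if b then tau k i else s k i) (UNIV \<times> UNIV \<times> {..<n})"
    and unif_tau: "\<And>k i j. i < n \<Longrightarrow> j < m \<Longrightarrow> measure M {\<omega> \<in> space M. tau k i \<omega> = j} = 1 / real m"
    and unif_s: "\<And>k i j. i < n \<Longrightarrow> j < m \<Longrightarrow> measure M {\<omega> \<in> space M. s k i \<omega> = j} = 1 / real m"
    and alpha: "0 < \<alpha>" "\<alpha> \<le> sqrt (real n) / (sqrt (8 * real m) * L)"
  shows "AE \<omega> in M.
     real_cond_exp M (filt M n tau s k)
        (\<lambda>\<omega>. gt_t n m W G \<alpha> x0 (\<lambda>t i. tau t i \<omega>) (\<lambda>t i. s t i \<omega>) (Suc k)) \<omega>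
     \<le> 2 * gt_t n m W G \<alpha> x0 (\<lambda>t i. tau t i \<omega>) (\<lambda>t i. s t i \<omega>) k
       + 3 * \<alpha>\<^sup>2 * (norm (avg_grad n m G (gt_x n m W G \<alpha> x0 (\<lambda>t i. tau t i \<omega>) (\<lambda>t i. s t i \<omega>) k)))\<^sup>2
       + 9 / (4 * real m * real n) * consensus_err n (gt_x n m W G \<alpha> x0 (\<lambda>t i. tau t i \<omega>) (\<lambda>t i. s t i \<omega>) k)"
proof -
  interpret gt_sampling n m M tau s k
    by (rule gt_sampling.intro[OF n m prob indep unif_tau unif_s])
  have "\<And>r. r < n \<Longrightarrow> (\<Sum>i<n. W i r) = 1"
    using Wds by (simp add: doubly_stochastic_def)
  then show ?thesis
    using AE_real_cond_exp_gt_t_Suc_le smooth step_size_condition[OF L m alpha] by blast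
qed

end
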